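(* Let $F$ be a field of characteristic $\neq 2$ and let $a,b\in F^*$ be such that the quadratic form $\langle 1,a,b,-ab\rangle$ is not weakly isotropic over $F$. Let $t\in F^*$ be a nonzero sum of squares in $F$. Then $\langle 1,a,b,-ab\rangle$ is not weakly isotropic over $F(\sqrt{t})$.
   Context: All fields have characteristic different from $2$; quadratic forms are finite-dimensional and nondegenerate. For a form $q$ and an integer $m\geq 1$, $m\times q$ denotes the orthogonal sum of $m$ copies of $q$. A form $q$ over $F$ is called weakly isotropic if $m\times q$ is isotropic for some integer $m\geq 1$. *)

theory Defs
  imports Main
begin

text \<open>A diagonal quadratic form  <q_0,...,q_(n-1)>  over a field is represented by
  the list of its coefficients.\<close>

definition isotropic :: "'a::field list \<Rightarrow> bool" where
  "isotropic q \<longleftrightarrow>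
     (\<exists>x::nat \<Rightarrow> 'a. (\<exists>i<length q. x i \<noteq> 0) \<and> (\<Sum>i<length q. q ! i * (x i)^2) = 0)"

definition orth_mult :: "nat \<Rightarrow> 'a list \<Rightarrow> 'a list" where
  "orth_mult m q = concat (replicate m q)"

definition weakly_isotropic :: "'a::field list \<Rightarrow> bool" where
  "weakly_isotropic q \<longleftrightarrow> (\<exists>m\<ge>1. isotropic (orth_mult m q))"

definition is_sum_of_squares :: "'a::field \<Rightarrow> bool" where
  "is_sum_of_squares t \<longleftrightarrow> (\<exists>n (y::nat \<Rightarrow> 'a). t = (\<Sum>i<n. (y i)^2))"

definition field_hom :: "('a::field \<Rightarrow> 'b::field) \<Rightarrow> bool" where
  "field_hom \<phi> \<longleftrightarrow> \<phi> 1 = 1 \<and> (\<forall>x y. \<phi> (x + y) = \<phi> x + \<phi> y) \<and> (\<forall>x y. \<phi> (x * y) = \<phi> x * \<phi> y)"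

text \<open>K (with embedding phi of F and element s) is F(sqrt t): s^2 = t and K = F + F s.\<close>
definition is_sqrt_extension :: "('a::field \<Rightarrow> 'b::field) \<Rightarrow> 'b \<Rightarrow> 'a \<Rightarrow> bool" where
  "is_sqrt_extension \<phi> s t \<longleftrightarrow> field_hom \<phi> \<and> s^2 = \<phi> t \<and> (\<forall>z. \<exists>x y. z = \<phi> x + \<phi> y * s)"

end

theory Submission imports Defs begin

(* Write K = F(sqrt t) and let Q = m x <1,a,b,-ab> be isotropic over K,
   witnessed by z_i = x_i + y_i s.  Comparing the F-part and the s-part of Q(z) = 0 gives
   A + 2 B s = 0 with A = Q(x) + t Q(y) and B the bilinear term sum_i Q_i x_i y_i.
   If B <> 0 then s lies in F and Q is already isotropic over F; if B = 0 then
   Q(x) + t Q(y) = 0.  In both cases Q(x) + t Q(y) = 0 for some nonzero pair (x,y)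
   over F.  Writing t = c_1^2 + ... + c_n^2, the value t Q(y) is represented by
   n x Q, so Q (+) n x Q = (n+1)m x <1,a,b,-ab> is isotropic over F, i.e. the form is
   weakly isotropic over F.  The argument uses nothing about the particular form. *)

definition form_value :: "'a::field list \<Rightarrow> (nat \<Rightarrow> 'a) \<Rightarrow> 'a" where
  "form_value q x = (\<Sum>i<length q. q ! i * (x i)^2)"

lemma isotropic_iff_form_value:
  "isotropic q \<longleftrightarrow> (\<exists>x. (\<exists>i<length q. x i \<noteq> 0) \<and> form_value q x = 0)"
  by (simp add: isotropic_def form_value_def)

definition join :: "nat \<Rightarrow> (nat \<Rightarrow> 'a) \<Rightarrow> (nat \<Rightarrow> 'a) \<Rightarrow> nat \<Rightarrow> 'a" where
  "join n x y i = (if i < n then x i else y (i - n))"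

lemma sum_lessThan_add:
  fixes f :: "nat \<Rightarrow> 'a::comm_monoid_add"
  shows "(\<Sum>i<m + n. f i) = (\<Sum>i<m. f i) + (\<Sum>i<n. f (m + i))"
  by (induction n) (simp_all add: add.assoc)

lemma form_value_append:
  "form_value (P @ Q) (join (length P) x y) = form_value P x + form_value Q y"
proof -
  have "(\<Sum>i<length P. (P @ Q) ! i * (join (length P) x y i)^2) = form_value P x"
    by (simp add: form_value_def join_def nth_append)
  then show ?thesis
    by (simp add: form_value_def sum_lessThan_add join_def)
qed

lemma orth_mult_Suc: "orth_mult (Suc n) q = q @ orth_mult n q"
  by (simp add: orth_mult_def)

lemma orth_mult_orth_mult: "orth_mult k (orth_mult m q) = orth_mult (k * m) q"
  by (induction k) (simp_all add: orth_mult_def replicate_add)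

text \<open>k x Q represents (c_0^2 + ... + c_(k-1)^2) Q(w), by the vector (c_0 w, ..., c_(k-1) w);
  this vector is nonzero when both c and w are.\<close>
lemma orth_mult_represents_sos_multiple:
  fixes Q :: "'a::field list"
  shows "\<exists>z. form_value (orth_mult k Q) z = (\<Sum>j<k. (c j)^2) * form_value Q w
      \<and> ((\<exists>j<k. c j \<noteq> 0) \<and> (\<exists>i<length Q. w i \<noteq> 0) \<longrightarrow> (\<exists>i<length (orth_mult k Q). z i \<noteq> 0))"
proof (induction k arbitrary: c)
  case 0
  show ?case by (simp add: orth_mult_def form_value_def)
next
  case (Suc k)
  obtain z where z_value: "form_value (orth_mult k Q) z = (\<Sum>j<k. (c (Suc j))^2) * form_value Q w"
    and z_nonzero: "(\<exists>j<k. c (Suc j) \<noteq> 0) \<and> (\<exists>i<length Q. w i \<noteq> 0)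
                      \<longrightarrow> (\<exists>i<length (orth_mult k Q). z i \<noteq> 0)"
    using Suc.IH[of "\<lambda>j. c (Suc j)"] by blast
  define z' where "z' = join (length Q) (\<lambda>i. c 0 * w i) z"
  have "form_value Q (\<lambda>i. c 0 * w i) = (c 0)^2 * form_value Q w"
    by (simp add: form_value_def sum_distrib_left power_mult_distrib algebra_simps)
  then have "form_value (orth_mult (Suc k) Q) z' = (\<Sum>j<Suc k. (c j)^2) * form_value Q w"
    unfolding z'_def orth_mult_Suc form_value_append z_value sum.lessThan_Suc_shift
    by (simp add: algebra_simps)
  moreover have "\<exists>i<length (orth_mult (Suc k) Q). z' i \<noteq> 0"
    if c_nonzero: "\<exists>j<Suc k. c j \<noteq> 0" and w_nonzero: "\<exists>i<length Q. w i \<noteq> 0"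
  proof (cases "c 0 = 0")
    case False
    with w_nonzero show ?thesis by (auto simp: z'_def join_def orth_mult_Suc)
  next
    case True
    with c_nonzero obtain j where "j < k" "c (Suc j) \<noteq> 0"
      by (metis less_Suc_eq_0_disj)
    with z_nonzero w_nonzero obtain i where "i < length (orth_mult k Q)" "z i \<noteq> 0" by blast
    then show ?thesis
      by (intro exI[of _ "length Q + i"]) (simp add: z'_def join_def orth_mult_Suc)
  qed
  ultimately show ?case by blast
qed

lemma weakly_isotropic_of_sos_relation:
  fixes q :: "'a::field list"
  assumes m: "m \<ge> 1"
    and t: "t \<noteq> 0" and sos: "is_sum_of_squares t"
    and nontrivial: "\<exists>i<length (orth_mult m q). x i \<noteq> 0 \<or> y i \<noteq> 0"
    and relation: "form_value (orth_mult m q) x + t * form_value (orth_mult m q) y = 0"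
  shows "weakly_isotropic q"
proof -
  define Q where "Q = orth_mult m q"
  obtain n :: nat and c where t_sos: "t = (\<Sum>j<n. (c j)^2)"
    using sos unfolding is_sum_of_squares_def by blast
  obtain z where z_value: "form_value (orth_mult n Q) z = t * form_value Q y"
    and z_nonzero: "(\<exists>j<n. c j \<noteq> 0) \<and> (\<exists>i<length Q. y i \<noteq> 0)
                      \<longrightarrow> (\<exists>i<length (orth_mult n Q). z i \<noteq> 0)"
    using orth_mult_represents_sos_multiple[of n Q c y] t_sos by blast
  have c_nonzero: "\<exists>j<n. c j \<noteq> 0"
  proof (rule ccontr)
    assume "\<not> (\<exists>j<n. c j \<noteq> 0)"
    then have "t = 0" unfolding t_sos by (intro sum.neutral) simp
    with t show False ..
  qed
  define v where "v = join (length Q) x z"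
  have "form_value (Q @ orth_mult n Q) v = 0"
    using relation unfolding v_def form_value_append z_value by (simp add: Q_def)
  moreover have "\<exists>i<length (Q @ orth_mult n Q). v i \<noteq> 0"
  proof -
    obtain i where i: "i < length Q" "x i \<noteq> 0 \<or> y i \<noteq> 0"
      using nontrivial unfolding Q_def by blast
    show ?thesis
    proof (cases "x i = 0")
      case False
      with i show ?thesis by (intro exI[of _ i]) (simp add: v_def join_def)
    next
      case True
      with i c_nonzero z_nonzero obtain k where "k < length (orth_mult n Q)" "z k \<noteq> 0"
        by blast
      then show ?thesis by (intro exI[of _ "length Q + k"]) (simp add: v_def join_def)
    qed
  qed
  ultimately have "isotropic (orth_mult (Suc n * m) q)"
    unfolding isotropic_iff_form_value Q_def orth_mult_orth_mult[symmetric] orth_mult_Suc[symmetric]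
    by blast
  then show ?thesis
    using m unfolding weakly_isotropic_def by (intro exI[of _ "Suc n * m"]) simp
qed

lemma field_hom_add_mult_one:
  assumes "field_hom \<phi>"
  shows "\<phi> (x + y) = \<phi> x + \<phi> y" "\<phi> (x * y) = \<phi> x * \<phi> y" "\<phi> 1 = 1"
  using assms unfolding field_hom_def by auto

lemma field_hom_zero:
  assumes "field_hom \<phi>" shows "\<phi> 0 = 0"
proof -
  have "\<phi> 0 + \<phi> 0 = \<phi> 0 + 0"
    using field_hom_add_mult_one(1)[OF assms, of 0 0] by simp
  then show ?thesis by (simp only: add_left_cancel)
qed

lemma field_hom_two:
  assumes "field_hom \<phi>" shows "\<phi> 2 = 2"
  using field_hom_add_mult_one(1)[OF assms, of 1 1] field_hom_add_mult_one(3)[OF assms]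
  by (metis one_add_one)

lemma field_hom_eq_0_iff:
  fixes \<phi> :: "'a::field \<Rightarrow> 'b::field"
  assumes "field_hom \<phi>" shows "\<phi> x = 0 \<longleftrightarrow> x = 0"
proof
  assume "\<phi> x = 0"
  show "x = 0"
  proof (rule ccontr)
    assume "x \<noteq> 0"
    then have "\<phi> x * \<phi> (inverse x) = 1"
      by (simp add: field_hom_add_mult_one[OF assms, symmetric])
    with \<open>\<phi> x = 0\<close> show False by simp
  qed
qed (simp add: field_hom_zero[OF assms])

lemma field_hom_sum:
  assumes "field_hom \<phi>"
  shows "\<phi> (\<Sum>i<(n::nat). f i) = (\<Sum>i<n. \<phi> (f i))"
  by (induction n) (simp_all add: field_hom_zero[OF assms] field_hom_add_mult_one[OF assms])

lemma form_value_map: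
  assumes "field_hom \<phi>"
  shows "form_value (map \<phi> Q) (\<lambda>i. \<phi> (x i)) = \<phi> (form_value Q x)"
  by (simp add: form_value_def field_hom_sum[OF assms] field_hom_add_mult_one[OF assms] power2_eq_square)

definition form_cross :: "'a::field list \<Rightarrow> (nat \<Rightarrow> 'a) \<Rightarrow> (nat \<Rightarrow> 'a) \<Rightarrow> 'a" where
  "form_cross q x y = (\<Sum>i<length q. q ! i * x i * y i)"

lemma form_value_split_sqrt:
  assumes hom: "field_hom \<phi>" and s_sq: "s^2 = \<phi> t"
  shows "form_value (map \<phi> Q) (\<lambda>i. \<phi> (x i) + \<phi> (y i) * s)
       = \<phi> (form_value Q x + t * form_value Q y) + \<phi> (2 * form_cross Q x y) * s"
proof -
  note hom_simps = field_hom_add_mult_one[OF hom] field_hom_two[OF hom]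
  have term_split: "\<phi> (Q ! i) * (\<phi> (x i) + \<phi> (y i) * s)^2
      = \<phi> (Q ! i * (x i)^2 + t * (Q ! i * (y i)^2)) + \<phi> (2 * (Q ! i * x i * y i)) * s" for i
  proof -
    have "\<phi> (Q ! i) * (\<phi> (x i) + \<phi> (y i) * s)^2
        = \<phi> (Q ! i) * (\<phi> (x i))^2 + \<phi> (Q ! i) * (\<phi> (y i))^2 * s^2
          + 2 * \<phi> (Q ! i) * \<phi> (x i) * \<phi> (y i) * s"
      by (simp add: power2_eq_square algebra_simps)
    also have "\<dots> = \<phi> (Q ! i * (x i)^2 + t * (Q ! i * (y i)^2)) + \<phi> (2 * (Q ! i * x i * y i)) * s"
      unfolding s_sq by (simp add: hom_simps power2_eq_square algebra_simps)
    finally show ?thesis .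
  qed
  have "form_value (map \<phi> Q) (\<lambda>i. \<phi> (x i) + \<phi> (y i) * s)
      = \<phi> (\<Sum>i<length Q. Q ! i * (x i)^2 + t * (Q ! i * (y i)^2))
        + \<phi> (\<Sum>i<length Q. 2 * (Q ! i * x i * y i)) * s"
    unfolding field_hom_sum[OF hom] by (simp add: form_value_def term_split sum.distrib sum_distrib_right)
  also have "\<dots> = \<phi> (form_value Q x + t * form_value Q y) + \<phi> (2 * form_cross Q x y) * s"
    unfolding form_value_def form_cross_def by (simp add: sum.distrib sum_distrib_left)
  finally show ?thesis .
qed

text \<open>An isotropic vector x + y s over F(sqrt t) yields a nontrivial relation Q(x') + t Q(y') = 0
  over F: either the cross term B(x,y) vanishes, or s lies in F and Q is isotropic over F.\<close>
lemma isotropic_over_sqrt_extension_descends: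
  fixes Q :: "'a::field list" and \<phi> :: "'a \<Rightarrow> 'b::field"
  assumes char: "(2::'a) \<noteq> 0"
    and sqrt_ext: "is_sqrt_extension \<phi> s t"
    and iso: "isotropic (map \<phi> Q)"
  shows "\<exists>x y. (\<exists>i<length Q. x i \<noteq> 0 \<or> y i \<noteq> 0) \<and> form_value Q x + t * form_value Q y = 0"
proof -
  have hom: "field_hom \<phi>" and s_sq: "s^2 = \<phi> t" and spans: "\<forall>w. \<exists>x y. w = \<phi> x + \<phi> y * s"
    using sqrt_ext unfolding is_sqrt_extension_def by auto
  note hom_simps = field_hom_add_mult_one[OF hom] field_hom_zero[OF hom]
  obtain z i0 where i0: "i0 < length Q" "z i0 \<noteq> 0" and z_iso: "form_value (map \<phi> Q) z = 0"
    using iso unfolding isotropic_iff_form_value by auto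
  have "\<forall>i. \<exists>x y. z i = \<phi> x + \<phi> y * s" using spans by blast
  then obtain X Y where z_eq: "z = (\<lambda>i. \<phi> (X i) + \<phi> (Y i) * s)"
    by (metis (no_types))
  define A where "A = form_value Q X + t * form_value Q Y"
  define B where "B = form_cross Q X Y"
  have AB: "\<phi> A + \<phi> (2 * B) * s = 0"
    using z_iso unfolding z_eq form_value_split_sqrt[OF hom s_sq] A_def B_def .
  show ?thesis
  proof (cases "B = 0")
    case True
    then have "A = 0"
      using AB by (simp add: hom_simps field_hom_eq_0_iff[OF hom])
    moreover have "X i0 \<noteq> 0 \<or> Y i0 \<noteq> 0"
      using i0(2) unfolding z_eq by (auto simp: hom_simps)
    ultimately show ?thesis
      using i0(1) unfolding A_def by blast
  next
    case False
    define c where "c = - A / (2 * B)"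
    have "c * (2 * B) + A = 0"
      using False char by (simp add: c_def)
    then have "\<phi> c * \<phi> (2 * B) + \<phi> A = 0"
      by (simp flip: hom_simps)
    have "(s - \<phi> c) * \<phi> (2 * B) = (\<phi> A + \<phi> (2 * B) * s) - (\<phi> c * \<phi> (2 * B) + \<phi> A)"
      by (simp add: algebra_simps)
    with AB \<open>\<phi> c * \<phi> (2 * B) + \<phi> A = 0\<close> have "(s - \<phi> c) * \<phi> (2 * B) = 0"
      by simp
    moreover have "\<phi> (2 * B) \<noteq> 0"
      using False char by (simp add: field_hom_eq_0_iff[OF hom])
    ultimately have s_in_F: "s = \<phi> c" by simp
    define x where "x = (\<lambda>i. X i + Y i * c)"
    have z_eq': "z = (\<lambda>i. \<phi> (x i))"
      by (simp add: z_eq x_def s_in_F hom_simps)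
    have "form_value Q x = 0"
      using z_iso unfolding z_eq' form_value_map[OF hom] field_hom_eq_0_iff[OF hom] .
    moreover have "x i0 \<noteq> 0"
      using i0(2) unfolding z_eq' by (auto simp: hom_simps)
    ultimately show ?thesis
      using i0(1) by (intro exI[of _ x] exI[of _ "\<lambda>_. 0"]) (auto simp: form_value_def)
  qed
qed

lemma orth_mult_map: "orth_mult m (map \<phi> q) = map \<phi> (orth_mult m q)"
  by (simp add: orth_mult_def map_concat)

lemma weakly_isotropic_descends:
  fixes q :: "'a::field list" and \<phi> :: "'a \<Rightarrow> 'b::field"
  assumes char: "(2::'a) \<noteq> 0"
    and t: "t \<noteq> 0" and sos: "is_sum_of_squares t"
    and sqrt_ext: "is_sqrt_extension \<phi> s t"
    and wi: "weakly_isotropic (map \<phi> q)"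
  shows "weakly_isotropic q"
proof -
  obtain m where m: "m \<ge> 1" and iso: "isotropic (map \<phi> (orth_mult m q))"
    using wi unfolding weakly_isotropic_def orth_mult_map by blast
  then obtain x y where "\<exists>i<length (orth_mult m q). x i \<noteq> 0 \<or> y i \<noteq> 0"
    and "form_value (orth_mult m q) x + t * form_value (orth_mult m q) y = 0"
    using isotropic_over_sqrt_extension_descends[OF char sqrt_ext] by blast
  then show ?thesis
    using weakly_isotropic_of_sos_relation[OF m t sos] by blast
qed

theorem lemma2p2:
  fixes a b t :: "'a::field" and \<phi> :: "'a \<Rightarrow> 'b::field" and s :: 'b
  assumes char: "(2::'a) \<noteq> 0"
    and a: "a \<noteq> 0" and b: "b \<noteq> 0"
    and not_wi: "\<not> weakly_isotropic [1, a, b, - (a * b)]"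
    and t: "t \<noteq> 0" and sos: "is_sum_of_squares t"
    and ext: "is_sqrt_extension \<phi> s t"
  shows "\<not> weakly_isotropic (map \<phi> [1, a, b, - (a * b)])"
  using weakly_isotropic_descends[OF char t sos ext] not_wi by blast

end
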